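(* Fix $\varepsilon_0\ge0$ and $n\ge1$. Let $d\ge2$, $\rho\in\mathfrak M_d$, $i\ne j$, and assume $W_\rho$ is $\varepsilon_0$-LDP. Suppose that for every $\alpha\ge1$ both $$H_\alpha\bigl(Q^{ij}_{1,n},Q^{ij}_{0,n}\bigr)=H_\alpha\bigl(Q^{\mathrm{BRR}}_{1,n},Q^{\mathrm{BRR}}_{0,n}\bigr)\quad\text{and}\quad H_\alpha\bigl(Q^{ij}_{0,n},Q^{ij}_{1,n}\bigr)=H_\alpha\bigl(Q^{\mathrm{BRR}}_{0,n},Q^{\mathrm{BRR}}_{1,n}\bigr).$$ Then $\mu_{ij}=\mu^\star$. Consequently the pairwise likelihood ratio $dW_\rho(\cdot\mid j)/dW_\rho(\cdot\mid i)$ takes only the values $e^{\pm\varepsilon_0}$ almost surely under $W_\rho(\cdot\mid i)$ (when $\varepsilon_0>0$), and the two-row experiment obtained by merging outputs according to the value of this likelihood ratio is exactly binary randomized response with parameter $\varepsilon_0$ (rows $i,j$ mapped to rows $1,2$).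
   Context: Let $H\in\mathbb R^{d\times(d-1)}$ have orthonormal columns spanning $\{u\in\mathbb R^d:\mathbf 1^\top u=0\}$, set $\gamma_i:=H^\top e_i$ ($i\in[d]$), $\mathcal X_d:=\{x\in\mathbb R^{d-1}:1+\gamma_i^\top x\ge0\ \forall i\}$. An anchored law is a Borel probability measure $\rho$ on $\mathcal X_d$ with $\int x\,\rho(dx)=0$; $\mathfrak M_d$ is the set of anchored laws, and $W_\rho(B\mid i):=\int_B(1+\gamma_i^\top x)\rho(dx)$. A channel $W$ is $\varepsilon_0$-LDP if $W(B\mid j)\le e^{\varepsilon_0}W(B\mid i)$ for all measurable $B$ and all $i,j$. For $i\ne j$, $Q^{ij}_{0,n}:=W_\rho(\cdot\mid i)^{\otimes n}$ and $Q^{ij}_{1,n}:=\frac1n\sum_{m=1}^n W_\rho(\cdot\mid i)^{\otimes(m-1)}\otimes W_\rho(\cdot\mid j)\otimes W_\rho(\cdot\mid i)^{\otimes(n-m)}$. Binary randomized response (BRR) with parameter $\varepsilon_0$ is the channel on $\{1,2\}$ with $W(1\mid1)=W(2\mid2)=e^{\varepsilon_0}/(1+e^{\varepsilon_0})$, $W(2\mid1)=W(1\mid2)=1/(1+e^{\varepsilon_0})$; $Q^{\mathrm{BRR}}_{0,n},Q^{\mathrm{BRR}}_{1,n}$ are its analogous pair with $(i,j)=(1,2)$. For $\alpha\ge1$, $H_\alpha(P,Q):=\int(dP/dQ-\alpha)_+\,dQ$. $\mu_{ij}$ is the law of $\frac{dW_\rho(\cdot\mid j)}{dW_\rho(\cdot\mid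 i)}(X)$ with $X\sim W_\rho(\cdot\mid i)$. With $a:=e^{-\varepsilon_0}$, $b:=e^{\varepsilon_0}$: if $\varepsilon_0=0$, $\mu^\star:=\delta_1$; if $\varepsilon_0>0$, $\mu^\star:=\frac{b-1}{b-a}\delta_a+\frac{1-a}{b-a}\delta_b$ (the unique mean-one law on $\{a,b\}$). *)

theory Defs
  imports "HOL-Probability.Probability"
begin

text \<open>Coordinates: R^d is real^'d, R^(d-1) is real^'k with CARD('d) = CARD('k) + 1.
  H :: real^'k^'d is the d x (d-1) matrix; its i-th row is gamma_i = H^T e_i.\<close>

definition gam :: "real^'k^'d \<Rightarrow> 'd \<Rightarrow> real^'k" where
  "gam H i = transpose H *v axis i 1"

definition Xd :: "real^'k^'d \<Rightarrow> (real^'k) set" where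
  "Xd H = {x. \<forall>i. 1 + gam H i \<bullet> x \<ge> 0}"

definition anchored :: "real^'k^'d \<Rightarrow> (real^'k) measure \<Rightarrow> bool" where
  "anchored H \<rho> \<longleftrightarrow> prob_space \<rho> \<and> space \<rho> = Xd H \<and>
     sets \<rho> = sets (restrict_space borel (Xd H)) \<and>
     integrable \<rho> (\<lambda>x. x) \<and> integral\<^sup>L \<rho> (\<lambda>x. x) = 0"

definition Wch :: "real^'k^'d \<Rightarrow> (real^'k) measure \<Rightarrow> 'd \<Rightarrow> (real^'k) measure" where
  "Wch H \<rho> i = density \<rho> (\<lambda>x. ennreal (1 + gam H i \<bullet> x))"

definition ldp :: "real \<Rightarrow> ('i \<Rightarrow> 'a measure) \<Rightarrow> 'i set \<Rightarrow> bool" where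
  "ldp \<epsilon> W I \<longleftrightarrow> (\<forall>i\<in>I. \<forall>j\<in>I. \<forall>B\<in>sets (W i).
      emeasure (W j) B \<le> ennreal (exp \<epsilon>) * emeasure (W i) B)"

definition mixture :: "'a measure \<Rightarrow> 'm set \<Rightarrow> ('m \<Rightarrow> real) \<Rightarrow> ('m \<Rightarrow> 'a measure) \<Rightarrow> 'a measure" where
  "mixture \<Omega> I w Ms = measure_of (space \<Omega>) (sets \<Omega>)
      (\<lambda>A. \<Sum>m\<in>I. ennreal (w m) * emeasure (Ms m) A)"

definition Q0 :: "nat \<Rightarrow> 'a measure \<Rightarrow> 'a measure \<Rightarrow> (nat \<Rightarrow> 'a) measure" where
  "Q0 n Wi Wj = PiM {..<n} (\<lambda>_. Wi)"

definition Q1 :: "nat \<Rightarrow> 'a measure \<Rightarrow> 'a measure \<Rightarrow> (nat \<Rightarrow> 'a) measure" where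
  "Q1 n Wi Wj = mixture (PiM {..<n} (\<lambda>_. Wi)) {..<n} (\<lambda>_. 1 / real n)
      (\<lambda>m. PiM {..<n} (\<lambda>k. if k = m then Wj else Wi))"

definition hockey :: "real \<Rightarrow> 'a measure \<Rightarrow> 'a measure \<Rightarrow> real" where
  "hockey \<alpha> P Q = integral\<^sup>L Q (\<lambda>x. max 0 (enn2real (RN_deriv Q P x) - \<alpha>))"

definition brr :: "real \<Rightarrow> nat \<Rightarrow> nat measure" where
  "brr \<epsilon> k = point_measure {1, 2}
     (\<lambda>y. ennreal (if y = k then exp \<epsilon> / (1 + exp \<epsilon>) else 1 / (1 + exp \<epsilon>)))"

definition LR :: "'a measure \<Rightarrow> 'a measure \<Rightarrow> 'a \<Rightarrow> real" where
  "LR Wi Wj x = enn2real (RN_deriv Wi Wj x)"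

definition mu_lr :: "'a measure \<Rightarrow> 'a measure \<Rightarrow> real measure" where
  "mu_lr Wi Wj = distr Wi borel (LR Wi Wj)"

definition mu_star :: "real \<Rightarrow> real measure" where
  "mu_star \<epsilon> = (if \<epsilon> = 0 then return borel 1 else
     mixture borel {exp (-\<epsilon>), exp \<epsilon>}
       (\<lambda>t. if t = exp (-\<epsilon>) then (exp \<epsilon> - 1) / (exp \<epsilon> - exp (-\<epsilon>))
            else (1 - exp (-\<epsilon>)) / (exp \<epsilon> - exp (-\<epsilon>)))
       (\<lambda>t. return borel t))"

definition merge_lr :: "real \<Rightarrow> 'a measure \<Rightarrow> 'a measure \<Rightarrow> 'a \<Rightarrow> nat" where
  "merge_lr \<epsilon> Wi Wj x = (if LR Wi Wj x = exp (-\<epsilon>) then 1 else 2)"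

end

theory Submission
  imports Defs
begin

(* Let L = dW(.|j)/dW(.|i).  The mixture Q1 has density (L(x_1) + ... + L(x_n))/n with respect
   to Q0 = W(.|i)^n, so H_c(Q1, Q0) is the mean of (avg_m L(X_m) - c)_+ over i.i.d. X_m ~ W(.|i).
   LDP puts L into [a, b] = [exp (-eps0), exp eps0], and E L = 1.  At the level
   c = b - (b - a)/(2n) the Weierstrass product inequality bounds the integrand by
   (b - c) prod_m (L(X_m) - a)/(b - a), whence H_c(Q1, Q0) <= (b - c) ((1 - a)/(b - a))^n, strictly
   unless L is {a, b}-valued almost surely; binary randomized response attains the bound.  So the
   first family of hypotheses, at this single level, forces L in {a, b} a.s., and E L = 1 then
   determines both masses. *)

section \<open>The hockey-stick divergence of Q1 against Q0\<close>

definition avg_excess :: "nat \<Rightarrow> real \<Rightarrow> (nat \<Rightarrow> real) \<Rightarrow> real" where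
  "avg_excess n c l = max 0 ((\<Sum>m<n. l m) / real n - c)"

lemma borel_measurable_avg_excess[measurable]:
  assumes [measurable]: "L \<in> borel_measurable P"
  shows "(\<lambda>x. avg_excess n c (\<lambda>m. L (x m))) \<in> borel_measurable (PiM {..<n} (\<lambda>_. P))"
  unfolding avg_excess_def by measurable

lemma mixture_cong:
  assumes "\<And>m. m \<in> I \<Longrightarrow> w m = w' m" "\<And>m. m \<in> I \<Longrightarrow> Ms m = Ms' m"
  shows "mixture \<Omega> I w Ms = mixture \<Omega> I w' Ms'"
  unfolding mixture_def using assms by (intro arg_cong[where f = "measure_of _ _"] ext sum.cong) auto

lemma mixture_density:
  fixes f :: "'m \<Rightarrow> 'a \<Rightarrow> ennreal"
  assumes f[measurable]: "\<And>m. m \<in> I \<Longrightarrow> f m \<in> borel_measurable \<Omega>" and "finite I"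
  shows "mixture \<Omega> I w (\<lambda>m. density \<Omega> (f m)) = density \<Omega> (\<lambda>x. \<Sum>m\<in>I. ennreal (w m) * f m x)"
proof -
  let ?D = "density \<Omega> (\<lambda>x. \<Sum>m\<in>I. ennreal (w m) * f m x)"
  have "?D = measure_of (space \<Omega>) (sets \<Omega>) (emeasure ?D)"
    using measure_of_of_measure[of ?D] by simp
  also have "\<dots> = mixture \<Omega> I w (\<lambda>m. density \<Omega> (f m))"
    unfolding mixture_def
  proof (rule measure_of_eq[OF sets.space_closed])
    fix A assume "A \<in> sigma_sets (space \<Omega>) (sets \<Omega>)"
    then have A[measurable]: "A \<in> sets \<Omega>"
      by (simp add: sets.sigma_sets_eq)
    have "emeasure ?D A = (\<integral>\<^sup>+ x. (\<Sum>m\<in>I. ennreal (w m) * (f m x * indicator A x)) \<partial>\<Omega>)"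
      by (auto simp: emeasure_density sum_distrib_right mult.assoc intro!: nn_integral_cong)
    also have "\<dots> = (\<Sum>m\<in>I. ennreal (w m) * emeasure (density \<Omega> (f m)) A)"
      using \<open>finite I\<close> by (simp add: nn_integral_sum nn_integral_cmult emeasure_density)
    finally show "emeasure ?D A = (\<Sum>m\<in>I. ennreal (w m) * emeasure (density \<Omega> (f m)) A)" .
  qed
  finally show ?thesis ..
qed

lemma PiM_density_coordinate:
  fixes g :: "'a \<Rightarrow> ennreal"
  assumes P: "prob_space P" and Pg: "prob_space (density P g)"
    and g[measurable]: "g \<in> borel_measurable P" and I: "finite I" and m: "m \<in> I"
  shows "PiM I (\<lambda>k. if k = m then density P g else P) = density (PiM I (\<lambda>_. P)) (\<lambda>x. g (x m))"
proof -
  let ?M = "\<lambda>k. if k = m then density P g else P"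
  interpret M: product_sigma_finite ?M
    unfolding product_sigma_finite_def using P Pg by (auto simp: prob_space_imp_sigma_finite)
  interpret C: product_sigma_finite "\<lambda>_. P"
    unfolding product_sigma_finite_def using P by (auto simp: prob_space_imp_sigma_finite)
  show ?thesis
  proof (rule M.PiM_eqI[symmetric, OF I])
    show "sets (density (PiM I (\<lambda>_. P)) (\<lambda>x. g (x m))) = sets (PiM I ?M)"
      by (auto intro!: sets_PiM_cong split: if_splits)
  next
    fix A assume "\<And>k. k \<in> I \<Longrightarrow> A k \<in> sets (?M k)"
    then have A: "\<And>k. k \<in> I \<Longrightarrow> A k \<in> sets P"
      by (metis sets_density)
    have "emeasure (density (PiM I (\<lambda>_. P)) (\<lambda>x. g (x m))) (Pi\<^sub>E I A)
        = (\<integral>\<^sup>+ x. (\<Prod>k\<in>I. (if k = m then g (x k) else 1) * indicator (A k) (x k)) \<partial>PiM I (\<lambda>_. P))"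
    proof -
      have "g (x m) * indicator (Pi\<^sub>E I A) x
          = (\<Prod>k\<in>I. (if k = m then g (x k) else 1) * indicator (A k) (x k))"
        if "x \<in> space (PiM I (\<lambda>_. P))" for x
        using that I m
        by (auto simp: prod.distrib prod.If_cases Int_absorb1 indicator_def space_PiM PiE_iff
            prod_zero_iff)
      then show ?thesis
        using A I m by (subst emeasure_density) (auto intro!: sets_PiM_I_finite nn_integral_cong)
    qed
    also have "\<dots> = (\<Prod>k\<in>I. \<integral>\<^sup>+ y. (if k = m then g y else 1) * indicator (A k) y \<partial>P)"
      using A I by (intro C.product_nn_integral_prod) auto
    also have "\<dots> = (\<Prod>k\<in>I. emeasure (?M k) (A k))"
      using A by (intro prod.cong) (auto simp: emeasure_density)
    finally show "emeasure (density (PiM I (\<lambda>_. P)) (\<lambda>x. g (x m))) (Pi\<^sub>E I A)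
        = (\<Prod>k\<in>I. emeasure (?M k) (A k))" .
  qed
qed

lemma Q1_density:
  fixes L :: "'a \<Rightarrow> real"
  assumes P: "prob_space P" and PL: "prob_space (density P L)"
    and L[measurable]: "L \<in> borel_measurable P" and L_nonneg: "\<And>x. x \<in> space P \<Longrightarrow> 0 \<le> L x"
  shows "Q1 n P (density P L) = density (PiM {..<n} (\<lambda>_. P)) (\<lambda>x. (\<Sum>m<n. L (x m)) / real n)"
proof -
  let ?\<Pi> = "PiM {..<n} (\<lambda>_. P)"
  have "Q1 n P (density P L)
      = mixture ?\<Pi> {..<n} (\<lambda>_. 1 / real n) (\<lambda>m. density ?\<Pi> (\<lambda>x. ennreal (L (x m))))"
    unfolding Q1_def using P PL by (intro mixture_cong PiM_density_coordinate) auto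
  also have "\<dots> = density ?\<Pi> (\<lambda>x. \<Sum>m<n. ennreal (1 / real n) * ennreal (L (x m)))"
    by (rule mixture_density) auto
  also have "\<dots> = density ?\<Pi> (\<lambda>x. (\<Sum>m<n. L (x m)) / real n)"
  proof (rule density_cong)
    show "AE x in ?\<Pi>. (\<Sum>m<n. ennreal (1 / real n) * ennreal (L (x m)))
        = ennreal ((\<Sum>m<n. L (x m)) / real n)"
    proof (rule AE_I2)
      fix x assume "x \<in> space ?\<Pi>"
      then have "0 \<le> L (x m) / real n" if "m < n" for m
        using that L_nonneg by (auto simp: space_PiM PiE_iff)
      then have "(\<Sum>m<n. ennreal (L (x m) / real n)) = ennreal (\<Sum>m<n. L (x m) / real n)"
        by (intro sum_ennreal) auto
      then show "(\<Sum>m<n. ennreal (1 / real n) * ennreal (L (x m))) = ennreal ((\<Sum>m<n. L (x m)) / real n)"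
        by (simp add: ennreal_mult'[symmetric] sum_divide_distrib)
    qed
  qed auto
  finally show ?thesis .
qed

lemma hockey_Q1_Q0_density:
  fixes L :: "'a \<Rightarrow> real"
  assumes P: "prob_space P" and PL: "prob_space (density P L)"
    and L[measurable]: "L \<in> borel_measurable P" and L_nonneg: "\<And>x. x \<in> space P \<Longrightarrow> 0 \<le> L x"
  shows "hockey \<alpha> (Q1 n P (density P L)) (Q0 n P (density P L))
       = (\<integral>x. avg_excess n \<alpha> (\<lambda>m. L (x m)) \<partial>PiM {..<n} (\<lambda>_. P))"
proof -
  let ?\<Pi> = "PiM {..<n} (\<lambda>_. P)"
  let ?S = "\<lambda>x. (\<Sum>m<n. L (x m)) / real n"
  interpret \<Pi>: prob_space ?\<Pi>
    using P by (intro prob_space_PiM) auto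
  have S_nonneg: "0 \<le> ?S x" if "x \<in> space ?\<Pi>" for x
    using that L_nonneg by (auto simp: space_PiM intro!: divide_nonneg_nonneg sum_nonneg)
  have "AE x in ?\<Pi>. ennreal (?S x) = RN_deriv ?\<Pi> (density ?\<Pi> (\<lambda>x. ennreal (?S x))) x"
    by (rule \<Pi>.RN_deriv_unique) auto
  then have "AE x in ?\<Pi>. max 0 (enn2real (RN_deriv ?\<Pi> (density ?\<Pi> (\<lambda>x. ennreal (?S x))) x) - \<alpha>)
      = avg_excess n \<alpha> (\<lambda>m. L (x m))"
    using AE_space by eventually_elim (metis S_nonneg avg_excess_def enn2real_ennreal)
  moreover have "Q1 n P (density P L) = density ?\<Pi> (\<lambda>x. ennreal (?S x))"
    by (rule Q1_density[OF P PL L L_nonneg])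
  ultimately show ?thesis
    unfolding hockey_def Q0_def by (intro integral_cong_AE) auto
qed

section \<open>A Weierstrass-type extremal inequality\<close>

text \<open>The level is chosen so that \<open>(avg - c)\<^sub>+ = (b - c) (1 - 2 \<Sum>\<^sub>k (1 - u\<^sub>k))\<^sub>+\<close> with
  \<open>u\<^sub>k = (l\<^sub>k - a)/(b - a)\<close>, to which the Weierstrass product inequality applies.\<close>

definition critical_level :: "real \<Rightarrow> real \<Rightarrow> nat \<Rightarrow> real" where
  "critical_level a b n = b - (b - a) / (2 * real n)"

lemma hinge_le_prod:
  fixes g :: "'a \<Rightarrow> real"
  assumes g: "\<And>x. x \<in> A \<Longrightarrow> g x \<in> {0..1}"
  shows "max 0 (1 - 2 * (\<Sum>x\<in>A. 1 - g x)) \<le> (\<Prod>x\<in>A. g x)"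
proof -
  have "1 - (\<Sum>x\<in>A. 1 - g x) \<le> (\<Prod>x\<in>A. 1 - (1 - g x))"
    using g by (intro Weierstrass_prod_ineq) auto
  moreover have "0 \<le> (\<Sum>x\<in>A. 1 - g x)" "0 \<le> (\<Prod>x\<in>A. g x)"
    using g by (auto intro: sum_nonneg prod_nonneg)
  ultimately show ?thesis by simp
qed

lemma hinge_less_prod:
  fixes g :: "'a \<Rightarrow> real"
  assumes "finite A" and g: "\<And>x. x \<in> A \<Longrightarrow> g x \<in> {0<..1}" and "y \<in> A" "g y < 1"
  shows "max 0 (1 - 2 * (\<Sum>x\<in>A. 1 - g x)) < (\<Prod>x\<in>A. g x)"
proof -
  have "1 - (\<Sum>x\<in>A. 1 - g x) \<le> (\<Prod>x\<in>A. 1 - (1 - g x))"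
    using g by (intro Weierstrass_prod_ineq) (force dest: g)
  moreover have "0 < (\<Sum>x\<in>A. 1 - g x)"
    using assms by (intro sum_pos2[of _ y]) auto
  moreover have "0 < (\<Prod>x\<in>A. g x)"
    using g by (intro prod_pos) auto
  ultimately show ?thesis by simp
qed

lemma hinge_eq_prod:
  fixes g :: "'a \<Rightarrow> real"
  assumes "finite A" and g: "\<And>x. x \<in> A \<Longrightarrow> g x = 0 \<or> g x = 1"
  shows "max 0 (1 - 2 * (\<Sum>x\<in>A. 1 - g x)) = (\<Prod>x\<in>A. g x)"
proof (cases "\<forall>x\<in>A. g x = 1")
  case False
  then obtain y where y: "y \<in> A" "g y = 0" using g by auto
  have "1 - g y \<le> (\<Sum>x\<in>A. 1 - g x)"
    using assms y by (intro member_le_sum) (auto dest: g)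
  moreover have "(\<Prod>x\<in>A. g x) = 0"
    using assms y by (intro prod_zero) auto
  ultimately show ?thesis using y by simp
qed simp

lemma avg_excess_eq_hinge:
  assumes "a < b" "1 \<le> n"
  shows "avg_excess n (critical_level a b n) l
       = (b - critical_level a b n) * max 0 (1 - 2 * (\<Sum>k<n. 1 - (l k - a) / (b - a)))"
proof -
  have "(\<Sum>k<n. 1 - (l k - a) / (b - a)) = (real n * b - (\<Sum>k<n. l k)) / (b - a)"
    using assms by (simp add: field_simps sum_subtractf sum_divide_distrib[symmetric])
  then have "(\<Sum>m<n. l m) / real n - critical_level a b n
      = (b - critical_level a b n) * (1 - 2 * (\<Sum>k<n. 1 - (l k - a) / (b - a)))"
    using assms by (simp add: critical_level_def field_simps)
  moreover have "0 < b - critical_level a b n"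
    using assms by (simp add: critical_level_def)
  ultimately show ?thesis
    by (simp add: avg_excess_def max_mult_distrib_left)
qed

lemma avg_excess_le_prod:
  assumes ab: "a < b" and n: "1 \<le> n" and l: "\<And>k. k < n \<Longrightarrow> a \<le> l k \<and> l k \<le> b"
  shows "avg_excess n (critical_level a b n) l
       \<le> (b - critical_level a b n) * (\<Prod>k<n. (l k - a) / (b - a))"
proof -
  have "max 0 (1 - 2 * (\<Sum>k<n. 1 - (l k - a) / (b - a))) \<le> (\<Prod>k<n. (l k - a) / (b - a))"
    using ab l by (intro hinge_le_prod) auto
  moreover have "0 < b - critical_level a b n"
    using ab n by (simp add: critical_level_def)
  ultimately show ?thesis
    unfolding avg_excess_eq_hinge[OF ab n] by (intro mult_left_mono) auto
qed

lemma avg_excess_less_prod: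
  assumes ab: "a < b" and n: "1 \<le> n" and l: "\<And>k. k < n \<Longrightarrow> a < l k \<and> l k \<le> b"
    and j: "j < n" "l j < b"
  shows "avg_excess n (critical_level a b n) l
       < (b - critical_level a b n) * (\<Prod>k<n. (l k - a) / (b - a))"
proof -
  have "max 0 (1 - 2 * (\<Sum>k<n. 1 - (l k - a) / (b - a))) < (\<Prod>k<n. (l k - a) / (b - a))"
    using ab l j by (intro hinge_less_prod[of _ _ j]) auto
  moreover have "0 < b - critical_level a b n"
    using ab n by (simp add: critical_level_def)
  ultimately show ?thesis
    unfolding avg_excess_eq_hinge[OF ab n] by (rule mult_strict_left_mono)
qed

lemma avg_excess_eq_prod:
  assumes ab: "a < b" and n: "1 \<le> n" and l: "\<And>k. k < n \<Longrightarrow> l k = a \<or> l k = b"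
  shows "avg_excess n (critical_level a b n) l
       = (b - critical_level a b n) * (\<Prod>k<n. (l k - a) / (b - a))"
proof -
  have "max 0 (1 - 2 * (\<Sum>k<n. 1 - (l k - a) / (b - a))) = (\<Prod>k<n. (l k - a) / (b - a))"
    using ab l by (intro hinge_eq_prod) fastforce+
  then show ?thesis
    unfolding avg_excess_eq_hinge[OF ab n] by simp
qed

lemma integrable_bounded_prob:
  fixes f :: "'a \<Rightarrow> real"
  assumes "prob_space M" "f \<in> borel_measurable M" "\<And>x. x \<in> space M \<Longrightarrow> a \<le> f x \<and> f x \<le> b"
  shows "integrable M f"
proof -
  interpret prob_space M by fact
  show ?thesis
    using assms by (intro integrable_const_bound[where B = "\<bar>a\<bar> + \<bar>b\<bar>"] AE_I2)
      (auto simp: abs_le_iff, fastforce+)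
qed

lemma integral_prod_normalized:
  fixes L :: "'a \<Rightarrow> real"
  assumes P: "prob_space P" and L: "integrable P L"
  shows "(\<integral>x. (\<Prod>k<n. (L (x k) - a) / (b - a)) \<partial>PiM {..<n} (\<lambda>_. P))
       = ((\<integral>y. L y \<partial>P - a) / (b - a)) ^ n"
proof -
  interpret P: prob_space P by fact
  interpret product_sigma_finite "\<lambda>_. P"
    unfolding product_sigma_finite_def by (auto intro: P.sigma_finite_measure_axioms)
  have "(\<integral>x. (\<Prod>k<n. (L (x k) - a) / (b - a)) \<partial>PiM {..<n} (\<lambda>_. P))
      = (\<Prod>k<n. \<integral>y. (L y - a) / (b - a) \<partial>P)"
    using L by (intro product_integral_prod) auto
  then show ?thesis
    using L by (simp add: P.prob_space)
qed

lemma integral_avg_excess_two_valued: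
  fixes L :: "'a \<Rightarrow> real"
  assumes P: "prob_space P" and L[measurable]: "L \<in> borel_measurable P"
    and two: "\<And>x. x \<in> space P \<Longrightarrow> L x = a \<or> L x = b" and ab: "a < b" and n: "1 \<le> n"
  shows "(\<integral>x. avg_excess n (critical_level a b n) (\<lambda>m. L (x m)) \<partial>PiM {..<n} (\<lambda>_. P))
       = (b - critical_level a b n) * ((\<integral>y. L y \<partial>P - a) / (b - a)) ^ n"
proof -
  have "(\<integral>x. avg_excess n (critical_level a b n) (\<lambda>m. L (x m)) \<partial>PiM {..<n} (\<lambda>_. P))
      = (\<integral>x. (b - critical_level a b n) * (\<Prod>k<n. (L (x k) - a) / (b - a)) \<partial>PiM {..<n} (\<lambda>_. P))"
    using two by (intro Bochner_Integration.integral_cong avg_excess_eq_prod[OF ab n])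
      (auto simp: space_PiM)
  also have "\<dots> = (b - critical_level a b n) * ((\<integral>y. L y \<partial>P - a) / (b - a)) ^ n"
  proof -
    have "integrable P L"
      using P two ab by (intro integrable_bounded_prob[of P L a b]) fastforce+
    then show ?thesis by (simp add: integral_prod_normalized[OF P])
  qed
  finally show ?thesis .
qed

lemma AE_avg_excess_eq_prod_of_integral_eq:
  fixes L :: "'a \<Rightarrow> real"
  assumes P: "prob_space P" and L[measurable]: "L \<in> borel_measurable P"
    and bnd: "\<And>x. x \<in> space P \<Longrightarrow> a \<le> L x \<and> L x \<le> b" and ab: "a < b" and n: "1 \<le> n"
    and eq: "(\<integral>x. avg_excess n (critical_level a b n) (\<lambda>m. L (x m)) \<partial>PiM {..<n} (\<lambda>_. P))
       = (b - critical_level a b n) * ((\<integral>y. L y \<partial>P - a) / (b - a)) ^ n"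
  shows "AE x in PiM {..<n} (\<lambda>_. P). avg_excess n (critical_level a b n) (\<lambda>m. L (x m))
       = (b - critical_level a b n) * (\<Prod>k<n. (L (x k) - a) / (b - a))"
proof -
  let ?\<Pi> = "PiM {..<n} (\<lambda>_. P)"
  interpret \<Pi>: prob_space ?\<Pi>
    by (intro prob_space_PiM) (auto intro: P)
  define G where "G x = avg_excess n (critical_level a b n) (\<lambda>m. L (x m))" for x
  define F where "F x = (b - critical_level a b n) * (\<Prod>k<n. (L (x k) - a) / (b - a))" for x
  have coord: "x k \<in> space P" if "x \<in> space ?\<Pi>" "k < n" for x k
    using that by (auto simp: space_PiM)
  have G_le_F: "0 \<le> G x \<and> G x \<le> F x" if "x \<in> space ?\<Pi>" for x
  proof -
    have "G x \<le> F x"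
      unfolding G_def F_def using that bnd coord by (intro avg_excess_le_prod[OF ab n]) auto
    then show ?thesis by (simp add: G_def avg_excess_def)
  qed
  have F_bnd: "0 \<le> F x \<and> F x \<le> b - critical_level a b n" if "x \<in> space ?\<Pi>" for x
  proof -
    have "0 \<le> (\<Prod>k<n. (L (x k) - a) / (b - a)) \<and> (\<Prod>k<n. (L (x k) - a) / (b - a)) \<le> 1"
      using that bnd coord ab by (auto intro!: prod_nonneg prod_le_1)
    moreover have "0 < b - critical_level a b n"
      using ab n by (simp add: critical_level_def)
    ultimately show ?thesis
      unfolding F_def by (simp add: mult_left_le)
  qed
  have [measurable]: "F \<in> borel_measurable ?\<Pi>"
    unfolding F_def by measurable
  have [measurable]: "G \<in> borel_measurable ?\<Pi>"
    unfolding G_def by measurable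
  have int_F: "integrable ?\<Pi> F"
    using F_bnd by (intro integrable_bounded_prob[OF \<Pi>.prob_space_axioms]) auto
  have "0 \<le> G x \<and> G x \<le> b - critical_level a b n" if "x \<in> space ?\<Pi>" for x
    using G_le_F[OF that] F_bnd[OF that] by linarith
  then have int_G: "integrable ?\<Pi> G"
    by (intro integrable_bounded_prob[OF \<Pi>.prob_space_axioms]) auto
  have "integrable P L"
    by (rule integrable_bounded_prob[OF P L bnd])
  then have "integral\<^sup>L ?\<Pi> G = integral\<^sup>L ?\<Pi> F"
    using eq unfolding F_def[abs_def] G_def[abs_def] by (simp add: integral_prod_normalized[OF P])
  then have "AE x in ?\<Pi>. G x = F x"
    using int_F int_G G_le_F by (intro \<Pi>.integral_eq_mono_AE_eq_AE AE_I2) auto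
  then show ?thesis
    by (simp add: F_def G_def)
qed

lemma emeasure_gt_ne_0_of_gt_integral:
  fixes L :: "'a \<Rightarrow> real"
  assumes P: "prob_space P" and L: "integrable P L" and mean: "a < (\<integral>y. L y \<partial>P)"
  shows "emeasure P {x \<in> space P. a < L x} \<noteq> 0"
proof
  interpret P: prob_space P by fact
  assume "emeasure P {x \<in> space P. a < L x} = 0"
  then have "AE x in P. L x \<le> a"
    using L by (intro AE_I[of _ _ "{x \<in> space P. a < L x}"]) auto
  then have "(\<integral>y. L y \<partial>P) \<le> (\<integral>y. a \<partial>P)"
    using L by (intro integral_mono_AE) auto
  with mean show False
    by (simp add: P.prob_space)
qed

lemma AE_two_valued_of_AE_avg_excess_eq_prod:
  fixes L :: "'a \<Rightarrow> real"
  assumes P: "prob_space P" and L[measurable]: "L \<in> borel_measurable P"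
    and bnd: "\<And>x. x \<in> space P \<Longrightarrow> a \<le> L x \<and> L x \<le> b" and ab: "a < b" and n: "1 \<le> n"
    and mean: "a < (\<integral>y. L y \<partial>P)"
    and eq: "AE x in PiM {..<n} (\<lambda>_. P). avg_excess n (critical_level a b n) (\<lambda>m. L (x m))
       = (b - critical_level a b n) * (\<Prod>k<n. (L (x k) - a) / (b - a))"
  shows "AE x in P. L x = a \<or> L x = b"
proof -
  interpret P: prob_space P by fact
  interpret product_sigma_finite "\<lambda>_. P"
    unfolding product_sigma_finite_def by (auto intro: P.sigma_finite_measure_axioms)
  let ?\<Pi> = "PiM {..<n} (\<lambda>_. P)"
  from eq obtain N where N: "N \<in> null_sets ?\<Pi>"
    "{x \<in> space ?\<Pi>. avg_excess n (critical_level a b n) (\<lambda>m. L (x m))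
       \<noteq> (b - critical_level a b n) * (\<Prod>k<n. (L (x k) - a) / (b - a))} \<subseteq> N"
    by (auto elim!: AE_E)
  \<comment> \<open>The inequality is strict on this box, so the box is null; its factors \<open>{a < L}\<close> are not,
    since \<open>L\<close> has mean above \<open>a\<close>.\<close>
  define A where "A k = {x \<in> space P. a < L x \<and> (k = 0 \<longrightarrow> L x < b)}" for k :: nat
  have A_sets: "A k \<in> sets P" for k
    unfolding A_def by measurable
  have "Pi\<^sub>E {..<n} A \<subseteq> N"
  proof
    fix x assume x: "x \<in> Pi\<^sub>E {..<n} A"
    then have x_space: "x \<in> space ?\<Pi>"
      by (auto simp: space_PiM PiE_iff A_def)
    have x_A: "x k \<in> A k" if "k < n" for k
      using x that by (auto intro: PiE_mem)
    have "a < L (x k) \<and> L (x k) \<le> b" if "k < n" for k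
      using x_A[OF that] bnd by (auto simp: A_def)
    moreover have "L (x 0) < b"
      using x_A[of 0] n by (simp add: A_def)
    ultimately have "avg_excess n (critical_level a b n) (\<lambda>m. L (x m))
        < (b - critical_level a b n) * (\<Prod>k<n. (L (x k) - a) / (b - a))"
      using n by (intro avg_excess_less_prod[OF ab n, of _ 0]) auto
    then show "x \<in> N"
      using N(2) x_space by auto
  qed
  then have "emeasure ?\<Pi> (Pi\<^sub>E {..<n} A) = 0"
    using N(1) by (blast intro: emeasure_eq_0)
  then have "(\<Prod>k<n. emeasure P (A k)) = 0"
    using emeasure_PiM[of "{..<n}" A] A_sets by simp
  then obtain k where "emeasure P (A k) = 0"
    by (auto simp: prod_zero_iff)
  moreover have "emeasure P (A k) \<noteq> 0" if "k \<noteq> 0" for k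
    using that emeasure_gt_ne_0_of_gt_integral[OF P integrable_bounded_prob[OF P L bnd] mean]
    by (simp add: A_def)
  ultimately have "A 0 \<in> null_sets P"
    using A_sets by (cases "k = 0") auto
  then show ?thesis
    by (rule AE_I') (use bnd in \<open>auto simp: A_def less_le\<close>)
qed

section \<open>Likelihood ratios under local differential privacy\<close>

lemma borel_measurable_LR[measurable]: "LR M N \<in> borel_measurable M"
  unfolding LR_def by measurable

lemma AE_le_of_nn_integral_indicator_le:
  fixes f g :: "'a \<Rightarrow> ennreal"
  assumes [measurable]: "f \<in> borel_measurable M" "g \<in> borel_measurable M"
    and fin: "(\<integral>\<^sup>+ x. g x \<partial>M) \<noteq> \<infinity>"
    and le: "\<And>A. A \<in> sets M \<Longrightarrow> (\<integral>\<^sup>+ x. f x * indicator A x \<partial>M) \<le> (\<integral>\<^sup>+ x. g x * indicator A x \<partial>M)"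
  shows "AE x in M. f x \<le> g x"
proof (rule ccontr)
  let ?B = "{x \<in> space M. g x < f x}"
  assume not_le: "\<not> (AE x in M. f x \<le> g x)"
  have "(\<integral>\<^sup>+ x. g x * indicator ?B x \<partial>M) < (\<integral>\<^sup>+ x. f x * indicator ?B x \<partial>M)"
  proof (rule nn_integral_less)
    have "(\<integral>\<^sup>+ x. g x * indicator ?B x \<partial>M) \<le> (\<integral>\<^sup>+ x. g x \<partial>M)"
      by (intro nn_integral_mono) (simp add: indicator_def)
    with fin show "(\<integral>\<^sup>+ x. g x * indicator ?B x \<partial>M) \<noteq> \<infinity>"
      by (metis infinity_ennreal_def neq_top_trans)
    show "AE x in M. g x * indicator ?B x \<le> f x * indicator ?B x"
      by (intro AE_I2) (auto simp: indicator_def less_imp_le)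
    show "\<not> (AE x in M. f x * indicator ?B x \<le> g x * indicator ?B x)"
    proof
      assume "AE x in M. f x * indicator ?B x \<le> g x * indicator ?B x"
      then have "AE x in M. f x \<le> g x"
        using AE_space by eventually_elim (auto simp: indicator_def not_less[symmetric])
      with not_le show False ..
    qed
  qed auto
  with le[of ?B] show False
    by simp
qed

lemma density_RN_deriv_of_emeasure_le:
  fixes M N :: "'a measure"
  assumes M: "sigma_finite_measure M" and sets: "sets N = sets M"
    and up: "\<And>B. B \<in> sets M \<Longrightarrow> emeasure N B \<le> ennreal b * emeasure M B"
  shows "density M (RN_deriv M N) = N"
proof -
  have "absolutely_continuous M N"
    unfolding absolutely_continuous_def
  proof
    fix B assume "B \<in> null_sets M"
    then show "B \<in> null_sets N"
      using up[of B] sets by (auto simp: null_sets_def)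
  qed
  then show ?thesis
    by (rule sigma_finite_measure.density_RN_deriv[OF M _ sets])
qed

lemma AE_RN_deriv_mutually_bounded:
  fixes M N :: "'a measure" and b :: real
  assumes M: "prob_space M" and N: "prob_space N" and sets: "sets N = sets M" and b: "0 < b"
    and up: "\<And>B. B \<in> sets M \<Longrightarrow> emeasure N B \<le> ennreal b * emeasure M B"
    and lo: "\<And>B. B \<in> sets M \<Longrightarrow> emeasure M B \<le> ennreal b * emeasure N B"
  shows "AE x in M. ennreal (1 / b) \<le> RN_deriv M N x \<and> RN_deriv M N x \<le> ennreal b"
proof -
  interpret M: prob_space M by fact
  interpret N: prob_space N by fact
  let ?R = "RN_deriv M N"
  have dens: "density M ?R = N"
    using M.sigma_finite_measure_axioms sets up by (rule density_RN_deriv_of_emeasure_le)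
  have N_eq: "emeasure N B = (\<integral>\<^sup>+ x. ?R x * indicator B x \<partial>M)" if "B \<in> sets M" for B
    using that by (subst dens[symmetric]) (simp add: emeasure_density)
  have "AE x in M. ?R x \<le> ennreal b"
  proof (rule AE_le_of_nn_integral_indicator_le)
    fix B assume "B \<in> sets M"
    then show "(\<integral>\<^sup>+ x. ?R x * indicator B x \<partial>M) \<le> (\<integral>\<^sup>+ x. ennreal b * indicator B x \<partial>M)"
      using up by (simp add: N_eq[symmetric] nn_integral_cmult_indicator)
  qed (simp_all add: M.emeasure_space_1)
  moreover have "AE x in M. ennreal (1 / b) \<le> ?R x"
  proof (rule AE_le_of_nn_integral_indicator_le)
    fix B assume B: "B \<in> sets M"
    have "ennreal (1 / b) * emeasure M B \<le> ennreal (1 / b) * (ennreal b * emeasure N B)"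
      using lo[OF B] by (rule mult_left_mono) simp
    also have "\<dots> = emeasure N B"
      using b by (simp add: mult.assoc[symmetric] ennreal_mult[symmetric])
    finally show "(\<integral>\<^sup>+ x. ennreal (1 / b) * indicator B x \<partial>M) \<le> (\<integral>\<^sup>+ x. ?R x * indicator B x \<partial>M)"
      using B by (simp add: N_eq[symmetric] nn_integral_cmult_indicator)
  next
    show "(\<integral>\<^sup>+ x. ?R x \<partial>M) \<noteq> \<infinity>"
      using N_eq[of "space M"] N.emeasure_space_1 sets_eq_imp_space_eq[OF sets] by simp
  qed simp_all
  ultimately show ?thesis
    by eventually_elim blast
qed

lemma LR_mutually_bounded:
  fixes M N :: "'a measure" and b :: real
  assumes M: "prob_space M" and N: "prob_space N" and sets: "sets N = sets M" and b: "0 < b"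
    and up: "\<And>B. B \<in> sets M \<Longrightarrow> emeasure N B \<le> ennreal b * emeasure M B"
    and lo: "\<And>B. B \<in> sets M \<Longrightarrow> emeasure M B \<le> ennreal b * emeasure N B"
  shows "density M (\<lambda>x. ennreal (LR M N x)) = N"
    and "AE x in M. 1 / b \<le> LR M N x \<and> LR M N x \<le> b"
proof -
  let ?R = "RN_deriv M N"
  have dens: "density M ?R = N"
    using prob_space_imp_sigma_finite[OF M] sets up by (rule density_RN_deriv_of_emeasure_le)
  have "AE x in M. ennreal (1 / b) \<le> ?R x \<and> ?R x \<le> ennreal b"
    by (rule AE_RN_deriv_mutually_bounded[OF M N sets b up lo])
  then have bounds: "AE x in M. ennreal (LR M N x) = ?R x \<and> 1 / b \<le> LR M N x \<and> LR M N x \<le> b"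
  proof eventually_elim
    case (elim x)
    then have fin: "?R x < \<top>"
      using ennreal_less_top le_less_trans by blast
    have "enn2real (ennreal (1 / b)) \<le> enn2real (?R x)"
      using elim fin by (intro enn2real_mono) auto
    moreover have "enn2real (?R x) \<le> b"
      using elim b by (intro enn2real_leI) auto
    ultimately show ?case
      using fin b by (simp add: LR_def)
  qed
  then have "AE x in M. ennreal (LR M N x) = ?R x"
    by (rule eventually_mono) blast
  then have "density M (\<lambda>x. ennreal (LR M N x)) = density M ?R"
    by (intro density_cong) simp_all
  with dens show "density M (\<lambda>x. ennreal (LR M N x)) = N"
    by simp
  show "AE x in M. 1 / b \<le> LR M N x \<and> LR M N x \<le> b"
    using bounds by (rule eventually_mono) blast
qed

lemma sets_Wch[simp]: "sets (Wch H \<rho> k) = sets \<rho>"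
  unfolding Wch_def by simp

lemma prob_space_Wch:
  assumes "anchored H \<rho>"
  shows "prob_space (Wch H \<rho> k)"
proof -
  have \<rho>: "prob_space \<rho>" "space \<rho> = Xd H" "sets \<rho> = sets (restrict_space borel (Xd H))"
    and mean: "integrable \<rho> (\<lambda>x. x)" "integral\<^sup>L \<rho> (\<lambda>x. x) = 0"
    using assms unfolding anchored_def by auto
  interpret prob_space \<rho> by fact
  let ?f = "\<lambda>x. 1 + gam H k \<bullet> x"
  have "?f \<in> borel_measurable (restrict_space borel (Xd H))"
    by (intro measurable_restrict_space1) measurable
  then have [measurable]: "?f \<in> borel_measurable \<rho>"
    using \<rho>(3) by (simp cong: measurable_cong_sets)
  have "emeasure (Wch H \<rho> k) (space (Wch H \<rho> k)) = (\<integral>\<^sup>+ x. ennreal (?f x) \<partial>\<rho>)"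
    unfolding Wch_def by (simp add: emeasure_density nn_integral_density[symmetric])
  also have "\<dots> = ennreal (integral\<^sup>L \<rho> ?f)"
    using mean \<rho>(2) by (intro nn_integral_eq_integral) (auto simp: Xd_def intro!: AE_I2)
  also have "integral\<^sup>L \<rho> ?f = 1"
    using mean by (simp add: prob_space)
  finally show ?thesis
    by (intro prob_spaceI) simp
qed

lemma integral_eq_1_of_prob_space_density:
  fixes L :: "'a \<Rightarrow> real"
  assumes "prob_space (density P L)" and [measurable]: "L \<in> borel_measurable P"
    and "\<And>x. x \<in> space P \<Longrightarrow> 0 \<le> L x"
  shows "integral\<^sup>L P L = 1"
proof -
  have "(\<integral>\<^sup>+ x. ennreal (L x) \<partial>P) = 1"
    using prob_space.emeasure_space_1[OF assms(1)]
    by (simp add: emeasure_density nn_integral_density[symmetric])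
  then show ?thesis
    using assms by (simp add: integral_eq_nn_integral AE_I2)
qed

section \<open>Binary randomized response attains the bound\<close>

lemma space_brr: "space (brr e k) = {1, 2}"
  unfolding brr_def by (simp add: space_point_measure)

lemma sets_brr: "sets (brr e k) = Pow {1, 2}"
  unfolding brr_def by (simp add: sets_point_measure)

lemma prob_space_brr:
  assumes "k = 1 \<or> k = 2"
  shows "prob_space (brr e k)"
proof (rule prob_spaceI)
  have pos: "0 < 1 + exp e"
    by (simp add: add_pos_pos)
  have "emeasure (brr e k) (space (brr e k))
      = ennreal (exp e / (1 + exp e)) + ennreal (1 / (1 + exp e))"
    using assms unfolding space_brr unfolding brr_def
    by (subst emeasure_point_measure_finite) (auto simp: add.commute)
  also have "\<dots> = ennreal (exp e / (1 + exp e) + 1 / (1 + exp e))"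
    using pos by (intro ennreal_plus[symmetric]) auto
  also have "exp e / (1 + exp e) + 1 / (1 + exp e) = 1"
    using pos by (simp add: field_simps)
  finally show "emeasure (brr e k) (space (brr e k)) = 1"
    by simp
qed

lemma brr_2_eq_density:
  "brr e 2 = density (brr e 1) (\<lambda>y. ennreal (if y = 1 then exp (- e) else exp e))"
proof -
  have "ennreal (if y = 1 then exp e / (1 + exp e) else 1 / (1 + exp e))
        * ennreal (if y = 1 then exp (- e) else exp e)
      = ennreal (if y = 2 then exp e / (1 + exp e) else 1 / (1 + exp e))"
    if "y \<in> {1, 2}" for y :: nat
    using that by (auto simp: ennreal_mult'[symmetric] exp_minus field_simps)
  then show ?thesis
    unfolding brr_def point_measure_def
    by (subst density_density_eq) (auto intro!: density_cong AE_I2)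
qed

lemma one_le_critical_level_exp:
  assumes "0 \<le> e" "1 \<le> n"
  shows "1 \<le> critical_level (exp (- e)) (exp e) n"
proof -
  have "exp (- e) \<le> exp e"
    using assms by simp
  then have "(exp e - exp (- e)) / (2 * real n) \<le> (exp e - exp (- e)) / 2"
    using assms by (intro divide_left_mono) auto
  moreover have "1 \<le> (exp e + exp (- e)) / 2"
    using cosh_real_ge_1[of e] by (simp add: cosh_field_def)
  moreover have "exp e - (exp e - exp (- e)) / 2 = (exp e + exp (- e)) / 2"
    by (simp add: field_simps)
  ultimately show ?thesis
    unfolding critical_level_def by linarith
qed

lemma hockey_brr_critical_level:
  assumes e: "0 < e" and n: "1 \<le> n"
  defines "c \<equiv> critical_level (exp (- e)) (exp e) n"
  shows "hockey c (Q1 n (brr e 1) (brr e 2)) (Q0 n (brr e 1) (brr e 2))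
       = (exp e - c) * ((1 - exp (- e)) / (exp e - exp (- e))) ^ n"
proof -
  define L where "L y = (if y = (1::nat) then exp (- e) else exp e)" for y
  have ab: "exp (- e) < exp e"
    using e by simp
  have brr_2: "brr e 2 = density (brr e 1) L"
    unfolding L_def by (rule brr_2_eq_density)
  have prob_1: "prob_space (brr e 1)" and prob_2: "prob_space (density (brr e 1) L)"
    using prob_space_brr[of 1 e] prob_space_brr[of 2 e] by (simp_all add: brr_2)
  have sets_1: "sets (brr e 1) = sets (count_space {1, 2})"
    by (simp add: sets_brr)
  have L_meas[measurable]: "L \<in> borel_measurable (brr e 1)"
    by (subst measurable_cong_sets[OF sets_1 refl]) simp
  have "hockey c (Q1 n (brr e 1) (brr e 2)) (Q0 n (brr e 1) (brr e 2))
      = (\<integral>x. avg_excess n c (\<lambda>m. L (x m)) \<partial>PiM {..<n} (\<lambda>_. brr e 1))"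
    unfolding brr_2 by (rule hockey_Q1_Q0_density[OF prob_1 prob_2 L_meas]) (simp add: L_def)
  also have "\<dots> = (exp e - c) * ((integral\<^sup>L (brr e 1) L - exp (- e)) / (exp e - exp (- e))) ^ n"
    unfolding c_def by (rule integral_avg_excess_two_valued[OF prob_1 L_meas _ ab n]) (simp add: L_def)
  also have "integral\<^sup>L (brr e 1) L = 1"
    by (rule integral_eq_1_of_prob_space_density[OF prob_2 L_meas]) (simp add: L_def)
  finally show ?thesis .
qed

lemma AE_two_valued_of_hockey_eq_brr:
  fixes L :: "'a \<Rightarrow> real"
  assumes M: "prob_space M" and dens_prob: "prob_space (density M L)"
    and L[measurable]: "L \<in> borel_measurable M"
    and bnd: "\<And>x. x \<in> space M \<Longrightarrow> exp (- e) \<le> L x \<and> L x \<le> exp e"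
    and e: "0 < e" and n: "1 \<le> n"
  defines "c \<equiv> critical_level (exp (- e)) (exp e) n"
  assumes eq: "hockey c (Q1 n M (density M L)) (Q0 n M (density M L))
      = hockey c (Q1 n (brr e 1) (brr e 2)) (Q0 n (brr e 1) (brr e 2))"
  shows "AE x in M. L x = exp (- e) \<or> L x = exp e"
proof -
  have ab: "exp (- e) < exp e"
    using e by simp
  have L_nonneg: "0 \<le> L x" if "x \<in> space M" for x
    using bnd[OF that] by (meson exp_ge_zero order_trans)
  have mean: "integral\<^sup>L M L = 1"
    by (rule integral_eq_1_of_prob_space_density[OF dens_prob L L_nonneg])
  have "(\<integral>x. avg_excess n c (\<lambda>m. L (x m)) \<partial>PiM {..<n} (\<lambda>_. M))
      = hockey c (Q1 n M (density M L)) (Q0 n M (density M L))"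
    by (rule hockey_Q1_Q0_density[OF M dens_prob L L_nonneg, symmetric])
  also have "\<dots> = hockey c (Q1 n (brr e 1) (brr e 2)) (Q0 n (brr e 1) (brr e 2))"
    by (rule eq)
  also have "\<dots> = (exp e - c) * ((integral\<^sup>L M L - exp (- e)) / (exp e - exp (- e))) ^ n"
    unfolding mean c_def by (rule hockey_brr_critical_level[OF e n])
  finally have "AE x in PiM {..<n} (\<lambda>_. M). avg_excess n c (\<lambda>m. L (x m))
      = (exp e - c) * (\<Prod>k<n. (L (x k) - exp (- e)) / (exp e - exp (- e)))"
    unfolding c_def using bnd by (intro AE_avg_excess_eq_prod_of_integral_eq[OF M L _ ab n]) auto
  then show ?thesis
    unfolding c_def using mean e bnd by (intro AE_two_valued_of_AE_avg_excess_eq_prod[OF M L _ ab n]) auto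
qed

lemma AE_LR_two_valued:
  fixes M N :: "'a measure"
  assumes M: "prob_space M" and N: "prob_space N" and sets: "sets N = sets M"
    and e: "0 \<le> e" and n: "1 \<le> n"
    and up: "\<And>B. B \<in> sets M \<Longrightarrow> emeasure N B \<le> ennreal (exp e) * emeasure M B"
    and lo: "\<And>B. B \<in> sets M \<Longrightarrow> emeasure M B \<le> ennreal (exp e) * emeasure N B"
    and hockey_eq: "\<And>\<alpha>. 1 \<le> \<alpha> \<Longrightarrow> hockey \<alpha> (Q1 n M N) (Q0 n M N)
        = hockey \<alpha> (Q1 n (brr e 1) (brr e 2)) (Q0 n (brr e 1) (brr e 2))"
  shows "AE x in M. LR M N x = exp (- e) \<or> LR M N x = exp e"
proof -
  have inv: "1 / exp e = exp (- e)"
    by (simp add: exp_minus field_simps)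
  have dens: "density M (\<lambda>x. ennreal (LR M N x)) = N"
    by (rule LR_mutually_bounded(1)[OF M N sets exp_gt_zero up lo])
  have bounds: "AE x in M. exp (- e) \<le> LR M N x \<and> LR M N x \<le> exp e"
    using LR_mutually_bounded(2)[OF M N sets exp_gt_zero up lo] unfolding inv .
  show ?thesis
  proof (cases "e = 0")
    case True
    from bounds show ?thesis
      by eventually_elim (simp add: True)
  next
    case False
    with e have e_pos: "0 < e"
      by simp
    \<comment> \<open>Clamping makes the a.e. bounds on the likelihood ratio hold everywhere.\<close>
    define L where "L x = max (exp (- e)) (min (exp e) (LR M N x))" for x
    have L_LR: "AE x in M. L x = LR M N x"
      using bounds by eventually_elim (simp add: L_def)
    then have "density M L = density M (\<lambda>x. ennreal (LR M N x))"
      by (intro density_cong) (auto simp: L_def elim: eventually_mono)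
    with dens have N_L: "N = density M L"
      by simp
    have "AE x in M. L x = exp (- e) \<or> L x = exp e"
    proof (rule AE_two_valued_of_hockey_eq_brr[OF M _ _ _ e_pos n])
      show "prob_space (density M L)"
        using N unfolding N_L .
      show "L \<in> borel_measurable M"
        unfolding L_def by measurable
      show "exp (- e) \<le> L x \<and> L x \<le> exp e" for x
        using e_pos by (simp add: L_def)
      let ?c = "critical_level (exp (- e)) (exp e) n"
      show "hockey ?c (Q1 n M (density M L)) (Q0 n M (density M L))
          = hockey ?c (Q1 n (brr e 1) (brr e 2)) (Q0 n (brr e 1) (brr e 2))"
        unfolding N_L[symmetric] using e n by (intro hockey_eq one_le_critical_level_exp)
    qed
    with L_LR show ?thesis
      by eventually_elim simp
  qed
qed

section \<open>Two-valued likelihood ratios\<close>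

lemma nn_integral_two_valued:
  fixes f :: "'a \<Rightarrow> real" and h :: "real \<Rightarrow> ennreal"
  assumes [measurable]: "f \<in> borel_measurable M" and "a \<noteq> b"
    and two: "AE x in M. f x = a \<or> f x = b"
  shows "(\<integral>\<^sup>+ x. h (f x) \<partial>M)
       = h a * emeasure M {x \<in> space M. f x = a} + h b * emeasure M {x \<in> space M. f x = b}"
proof -
  have "(\<integral>\<^sup>+ x. h (f x) \<partial>M)
      = (\<integral>\<^sup>+ x. h a * indicator {x \<in> space M. f x = a} x
                + h b * indicator {x \<in> space M. f x = b} x \<partial>M)"
    using two AE_space by (intro nn_integral_cong_AE, eventually_elim)
      (use \<open>a \<noteq> b\<close> in \<open>auto simp: indicator_def\<close>)
  then show ?thesis
    by (simp add: nn_integral_add nn_integral_cmult_indicator)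
qed

lemma two_valued_masses:
  fixes f :: "'a \<Rightarrow> real"
  assumes M: "prob_space M" and Mf: "prob_space (density M f)"
    and [measurable]: "f \<in> borel_measurable M" and ab: "a \<noteq> b" "0 \<le> a" "0 \<le> b" and two: "AE x in M. f x = a \<or> f x = b"
  shows "measure M {x \<in> space M. f x = a} = (b - 1) / (b - a)"
    and "measure M {x \<in> space M. f x = b} = (1 - a) / (b - a)"
proof -
  interpret M: prob_space M by fact
  define pa where "pa = measure M {x \<in> space M. f x = a}"
  define pb where "pb = measure M {x \<in> space M. f x = b}"
  have nonneg: "0 \<le> pa" "0 \<le> pb"
    by (simp_all add: pa_def pb_def)
  have two_valued: "(\<integral>\<^sup>+ x. h (f x) \<partial>M) = h a * ennreal pa + h b * ennreal pb" for h
    unfolding pa_def pb_def M.emeasure_eq_measure[symmetric]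
    by (rule nn_integral_two_valued[OF _ ab(1) two]) simp
  have total: "ennreal (pa + pb) = 1"
    using two_valued[of "\<lambda>_. 1"] nonneg by (simp add: M.emeasure_space_1 ennreal_plus)
  have mean: "ennreal (a * pa + b * pb) = 1"
  proof -
    have "1 = emeasure (density M f) (space M)"
      using prob_space.emeasure_space_1[OF Mf] by simp
    also have "\<dots> = (\<integral>\<^sup>+ x. ennreal (f x) \<partial>M)"
      by (simp add: emeasure_density nn_integral_density[symmetric])
    also have "\<dots> = ennreal (a * pa + b * pb)"
      using two_valued[of ennreal] nonneg ab by (simp add: ennreal_mult ennreal_plus)
    finally show ?thesis ..
  qed
  have "pa + pb = 1" "a * pa + b * pb = 1"
    using total mean nonneg ab
    by (metis ennreal_1 ennreal_inj add_nonneg_nonneg mult_nonneg_nonneg zero_le_one)+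
  then show "pa = (b - 1) / (b - a)" "pb = (1 - a) / (b - a)"
    using ab(1) by (simp_all add: field_simps, algebra+)
qed

lemma emeasure_distr_nn_integral:
  assumes "g \<in> measurable M N" "A \<in> sets N"
  shows "emeasure (distr M N g) A = (\<integral>\<^sup>+ x. indicator A (g x) \<partial>M)"
proof -
  have "emeasure (distr M N g) A = (\<integral>\<^sup>+ x. indicator A x \<partial>distr M N g)"
    using assms by simp
  also have "\<dots> = (\<integral>\<^sup>+ x. indicator A (g x) \<partial>M)"
    using assms by (intro nn_integral_distr) simp_all
  finally show ?thesis .
qed

lemma distr_two_valued_borel:
  fixes f :: "'a \<Rightarrow> real"
  assumes M: "prob_space M" and [measurable]: "f \<in> borel_measurable M" and "a \<noteq> b"
    and two: "AE x in M. f x = a \<or> f x = b"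
    and w: "w a = measure M {x \<in> space M. f x = a}" "w b = measure M {x \<in> space M. f x = b}"
  shows "distr M borel f = mixture borel {a, b} w (return borel)"
proof -
  interpret M: prob_space M by fact
  let ?D = "distr M borel f"
  have "?D = measure_of (space borel) (sets borel) (emeasure ?D)"
    using measure_of_of_measure[of ?D] by simp
  also have "\<dots> = mixture borel {a, b} w (return borel)"
    unfolding mixture_def
  proof (rule measure_of_eq[OF sets.space_closed])
    fix A :: "real set" assume "A \<in> sigma_sets (space borel) (sets borel)"
    then have A: "A \<in> sets borel"
      using sets.sigma_sets_eq[of "borel :: real measure"] by simp
    have "emeasure ?D A = (\<integral>\<^sup>+ x. indicator A (f x) \<partial>M)"
      using A by (intro emeasure_distr_nn_integral) simp_all
    also have "\<dots> = indicator A a * emeasure M {x \<in> space M. f x = a}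
        + indicator A b * emeasure M {x \<in> space M. f x = b}"
      by (rule nn_integral_two_valued) fact+
    also have "\<dots> = ennreal (w a) * emeasure (return borel a) A + ennreal (w b) * emeasure (return borel b) A"
      using A by (simp add: w M.emeasure_eq_measure mult.commute)
    also have "\<dots> = (\<Sum>t\<in>{a, b}. ennreal (w t) * emeasure (return borel t) A)"
      using \<open>a \<noteq> b\<close> by (simp only: sum.insert_remove finite.emptyI finite_insert) simp
    finally show "emeasure ?D A = (\<Sum>t\<in>{a, b}. ennreal (w t) * emeasure (return borel t) A)" .
  qed
  finally show ?thesis .
qed

lemma distr_two_valued_count_space:
  fixes f :: "'a \<Rightarrow> real" and w :: "nat \<Rightarrow> ennreal"
  assumes [measurable]: "f \<in> borel_measurable M" and "a \<noteq> b"
    and two: "AE x in M. f x = a \<or> f x = b"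
    and w: "w 1 = emeasure M {x \<in> space M. f x = a}" "w 2 = emeasure M {x \<in> space M. f x = b}"
  shows "distr M (count_space {1, 2}) (\<lambda>x. if f x = a then 1 else 2) = point_measure {1, 2} w"
proof (rule measure_eqI)
  fix A assume "A \<in> sets (distr M (count_space {1, 2}) (\<lambda>x. if f x = a then 1 else 2 :: nat))"
  then have A: "A \<subseteq> {1, 2}"
    by simp
  have "emeasure (distr M (count_space {1, 2}) (\<lambda>x. if f x = a then 1 else 2)) A
      = (\<integral>\<^sup>+ x. indicator A (if f x = a then 1 else 2 :: nat) \<partial>M)"
    using A by (intro emeasure_distr_nn_integral) simp_all
  also have "\<dots> = indicator A (1::nat) * w 1 + indicator A (2::nat) * w 2"
    unfolding w using \<open>a \<noteq> b\<close>
    by (subst nn_integral_two_valued[where h = "\<lambda>t. indicator A (if t = a then 1 else 2 :: nat)"]) (auto intro: two)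
  also have "\<dots> = (\<Sum>y\<in>A. w y)"
  proof -
    have "(\<Sum>y\<in>A. w y) = (\<Sum>y\<in>{1, 2}. if y \<in> A then w y else 0)"
      using A sum.inter_restrict[of "{1::nat, 2}" w A] by (simp add: Int_absorb1)
    then show ?thesis
      by (simp add: indicator_def)
  qed
  also have "\<dots> = emeasure (point_measure {1, 2} w) A"
    using A by (simp add: emeasure_point_measure_finite)
  finally show "emeasure (distr M (count_space {1, 2}) (\<lambda>x. if f x = a then 1 else 2)) A
      = emeasure (point_measure {1, 2} w) A" .
qed (simp add: sets_point_measure)

lemma emeasure_density_level_set:
  fixes f :: "'a \<Rightarrow> real"
  assumes [measurable]: "f \<in> borel_measurable M"
  shows "emeasure (density M f) {x \<in> space M. f x = t} = ennreal t * emeasure M {x \<in> space M. f x = t}"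
proof -
  have "emeasure (density M f) {x \<in> space M. f x = t}
      = (\<integral>\<^sup>+ x. ennreal t * indicator {x \<in> space M. f x = t} x \<partial>M)"
    by (subst emeasure_density) (auto intro!: nn_integral_cong simp: indicator_def)
  then show ?thesis
    by (simp add: nn_integral_cmult_indicator)
qed

lemma distr_two_valued_mu_star:
  fixes f :: "'a \<Rightarrow> real"
  assumes M: "prob_space M" and Mf: "prob_space (density M f)" and [measurable]: "f \<in> borel_measurable M"
    and e: "0 \<le> e" and two: "AE x in M. f x = exp (- e) \<or> f x = exp e"
  shows "distr M borel f = mu_star e"
proof (cases "e = 0")
  case True
  from two have "AE x in M. f x = 1"
    by eventually_elim (simp add: True)
  then have "distr M borel f = distr M borel (\<lambda>_. 1)"
    by (intro distr_cong_AE) simp_all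
  with True show ?thesis
    by (simp add: mu_star_def prob_space.distr_const[OF M])
next
  case False
  with e have ab: "exp (- e) \<noteq> exp e"
    by simp
  note masses = two_valued_masses[OF M Mf _ ab _ _ two]
  show ?thesis
    unfolding mu_star_def using False ab masses
    by (simp, intro distr_two_valued_borel[OF M _ ab two]) simp_all
qed

lemma distr_merge_two_valued:
  fixes f :: "'a \<Rightarrow> real"
  assumes M: "prob_space M" and Mf: "prob_space (density M f)" and f[measurable]: "f \<in> borel_measurable M"
    and e: "0 < e" and two: "AE x in M. f x = exp (- e) \<or> f x = exp e"
  shows "distr M (count_space {1, 2}) (\<lambda>x. if f x = exp (- e) then 1 else 2) = brr e 1"
    and "distr (density M f) (count_space {1, 2}) (\<lambda>x. if f x = exp (- e) then 1 else 2) = brr e 2"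
proof -
  interpret M: prob_space M by fact
  let ?a = "exp (- e)" and ?b = "exp e"
  have ab: "?a \<noteq> ?b"
    using e by simp
  have inv: "?a * ?b = 1"
    by (simp add: exp_minus)
  have pos: "0 < 1 + ?b"
    by (simp add: add_pos_pos)
  have mass_a: "emeasure M {x \<in> space M. f x = ?a} = ennreal (?b / (1 + ?b))"
    and mass_b: "emeasure M {x \<in> space M. f x = ?b} = ennreal (1 / (1 + ?b))"
    using two_valued_masses[OF M Mf f ab _ _ two] ab inv pos
    by (simp_all add: M.emeasure_eq_measure divide_eq_eq field_simps, algebra+)
  show "distr M (count_space {1, 2}) (\<lambda>x. if f x = ?a then 1 else 2) = brr e 1"
    unfolding brr_def using mass_a mass_b by (intro distr_two_valued_count_space[OF f ab two]) simp_all
  have "AE x in density M f. f x = ?a \<or> f x = ?b"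
    using two by (subst AE_density) (auto elim: eventually_mono)
  moreover have "f \<in> borel_measurable (density M f)"
    by simp
  moreover have "ennreal (1 / (1 + ?b)) = emeasure (density M f) {x \<in> space (density M f). f x = ?a}"
    using inv pos by (simp add: emeasure_density_level_set mass_a ennreal_mult'[symmetric] field_simps)
  moreover have "ennreal (?b / (1 + ?b)) = emeasure (density M f) {x \<in> space (density M f). f x = ?b}"
    using pos by (simp add: emeasure_density_level_set mass_b ennreal_mult'[symmetric])
  ultimately have "distr (density M f) (count_space {1, 2}) (\<lambda>x. if f x = ?a then 1 else 2)
      = point_measure {1::nat, 2} (\<lambda>y. ennreal (if y = 2 then ?b / (1 + ?b) else 1 / (1 + ?b)))"
    using ab by (intro distr_two_valued_count_space) simp_all
  then show "distr (density M f) (count_space {1, 2}) (\<lambda>x. if f x = ?a then 1 else 2) = brr e 2"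
    by (simp add: brr_def)
qed

theorem theorem4p9:
  fixes \<epsilon>0 :: real and n :: nat
    and H :: "real^'k^'d" and \<rho> :: "(real^'k) measure" and i j :: 'd
  assumes eps: "\<epsilon>0 \<ge> 0" and n: "n \<ge> 1"
    and dim: "CARD('d) = CARD('k) + 1" and d2: "CARD('d) \<ge> 2"
    and H_orth: "transpose H ** H = mat 1"
    and H_span: "range (\<lambda>c. H *v c) = {u :: real^'d. (\<Sum>l\<in>UNIV. u $ l) = 0}"
    and rho: "anchored H \<rho>"
    and ij: "i \<noteq> j"
    and LDP: "ldp \<epsilon>0 (Wch H \<rho>) UNIV"
    and H10: "\<And>\<alpha>. \<alpha> \<ge> 1 \<Longrightarrow>
       hockey \<alpha> (Q1 n (Wch H \<rho> i) (Wch H \<rho> j)) (Q0 n (Wch H \<rho> i) (Wch H \<rho> j))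
       = hockey \<alpha> (Q1 n (brr \<epsilon>0 1) (brr \<epsilon>0 2)) (Q0 n (brr \<epsilon>0 1) (brr \<epsilon>0 2))"
    and H01: "\<And>\<alpha>. \<alpha> \<ge> 1 \<Longrightarrow>
       hockey \<alpha> (Q0 n (Wch H \<rho> i) (Wch H \<rho> j)) (Q1 n (Wch H \<rho> i) (Wch H \<rho> j))
       = hockey \<alpha> (Q0 n (brr \<epsilon>0 1) (brr \<epsilon>0 2)) (Q1 n (brr \<epsilon>0 1) (brr \<epsilon>0 2))"
  shows "mu_lr (Wch H \<rho> i) (Wch H \<rho> j) = mu_star \<epsilon>0
    \<and> (\<epsilon>0 > 0 \<longrightarrow>
         (AE x in Wch H \<rho> i. LR (Wch H \<rho> i) (Wch H \<rho> j) x \<in> {exp (-\<epsilon>0), exp \<epsilon>0})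
       \<and> distr (Wch H \<rho> i) (count_space {1, 2}) (merge_lr \<epsilon>0 (Wch H \<rho> i) (Wch H \<rho> j)) = brr \<epsilon>0 1
       \<and> distr (Wch H \<rho> j) (count_space {1, 2}) (merge_lr \<epsilon>0 (Wch H \<rho> i) (Wch H \<rho> j)) = brr \<epsilon>0 2)"
proof -
  let ?Wi = "Wch H \<rho> i" and ?Wj = "Wch H \<rho> j"
  have Wi: "prob_space ?Wi" and Wj: "prob_space ?Wj"
    using prob_space_Wch[OF rho] by auto
  have sets: "sets ?Wj = sets ?Wi"
    by simp
  have up: "\<And>B. B \<in> sets ?Wi \<Longrightarrow> emeasure ?Wj B \<le> ennreal (exp \<epsilon>0) * emeasure ?Wi B"
    and lo: "\<And>B. B \<in> sets ?Wi \<Longrightarrow> emeasure ?Wi B \<le> ennreal (exp \<epsilon>0) * emeasure ?Wj B"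
    using LDP by (auto simp: ldp_def)
  have dens: "density ?Wi (\<lambda>x. ennreal (LR ?Wi ?Wj x)) = ?Wj"
    by (rule LR_mutually_bounded(1)[OF Wi Wj sets exp_gt_zero up lo])
  with Wj have prob_LR: "prob_space (density ?Wi (\<lambda>x. ennreal (LR ?Wi ?Wj x)))"
    by simp
  have two: "AE x in ?Wi. LR ?Wi ?Wj x = exp (- \<epsilon>0) \<or> LR ?Wi ?Wj x = exp \<epsilon>0"
    by (rule AE_LR_two_valued[OF Wi Wj sets eps n up lo H10])
  have "mu_lr ?Wi ?Wj = mu_star \<epsilon>0"
    unfolding mu_lr_def by (rule distr_two_valued_mu_star[OF Wi prob_LR _ eps two]) simp
  moreover have "distr ?Wi (count_space {1, 2}) (merge_lr \<epsilon>0 ?Wi ?Wj) = brr \<epsilon>0 1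
      \<and> distr ?Wj (count_space {1, 2}) (merge_lr \<epsilon>0 ?Wi ?Wj) = brr \<epsilon>0 2" if "0 < \<epsilon>0"
    using distr_merge_two_valued[OF Wi prob_LR _ that two] unfolding dens merge_lr_def[abs_def]
    by simp
  moreover have "AE x in ?Wi. LR ?Wi ?Wj x \<in> {exp (- \<epsilon>0), exp \<epsilon>0}"
    using two by eventually_elim simp
  ultimately show ?thesis
    by blast
qed

end
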